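(* Let $\mathcal{A}$ be a $0/1$-arrangement in $\mathbb{Q}^n$ admitting a nice partition $\pi$, and let $H_A,H_B\in\mathcal{A}$ with $A,B$ conflicting. Then $H_A$ and $H_B$ lie in different blocks of $\pi$.
   Context: $H_I=\ker\big(\sum_{i\in I}x_i\big)\subseteq\mathbb{Q}^n$ for $I\subseteq\{1,\dots,n\}$. A $0/1$-arrangement is an arrangement all of whose hyperplanes are of the form $H_I$ for nonempty $I$. For a $0/1$-arrangement $\mathcal{A}$ and $H_A,H_B\in\mathcal{A}$ with $A\neq B$, the sets $A,B$ are conflicting if either (1) $A\cap B\neq\emptyset$, $A\not\subseteq B$ and $B\not\subseteq A$; or (2) $A\cap B=\emptyset$ or $A\subset B$ or $B\subset A$, and $H_{A\triangle B}\notin\mathcal{A}$ ($\triangle$ = symmetric difference). A partition $\pi=(\pi_1,\dots,\pi_s)$ of $\mathcal{A}$ is independent if for every choice $H_i\in\pi_i$ the $s$ defining forms are linearly independent; for $X\in L(\mathcal{A})$ the induced partition $\pi_X$ of $\mathcal{A}_X=\{H\in\mathcal{A}:X\subseteq H\}$ consists of the nonempty sets $\pi_i\cap\mathcal{A}_X$; $\pi$ is nice (a factorization) if it is independent and for every $X\in L(\mathcal{A})\setminus\{V\}$ the induced partition $\pi_X$ has a block which is a singleton. *)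

theory Defs
  imports "HOL-Analysis.Finite_Cartesian_Product"
begin

text \<open>The ambient space V = Q^n is rat^'n, coordinates indexed by the finite type 'n
  (n = CARD('n)). Index sets I are subsets of 'n.\<close>

definition lform :: "'n::finite set \<Rightarrow> rat^'n \<Rightarrow> rat" where
  "lform I x = (\<Sum>i\<in>I. x $ i)"

definition hyp :: "'n::finite set \<Rightarrow> (rat^'n) set" where
  "hyp I = {x. lform I x = 0}"

definition zero_one_arrangement :: "(rat^'n::finite) set set \<Rightarrow> bool" where
  "zero_one_arrangement \<A> \<longleftrightarrow> finite \<A> \<and> (\<forall>H\<in>\<A>. \<exists>I. I \<noteq> {} \<and> H = hyp I)"

definition sym_diff :: "'a set \<Rightarrow> 'a set \<Rightarrow> 'a set" where
  "sym_diff A B = (A - B) \<union> (B - A)"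

definition conflicting :: "(rat^'n::finite) set set \<Rightarrow> 'n set \<Rightarrow> 'n set \<Rightarrow> bool" where
  "conflicting \<A> A B \<longleftrightarrow>
     (A \<inter> B \<noteq> {} \<and> \<not> A \<subseteq> B \<and> \<not> B \<subseteq> A) \<or>
     ((A \<inter> B = {} \<or> A \<subset> B \<or> B \<subset> A) \<and> hyp (sym_diff A B) \<notin> \<A>)"

text \<open>Intersection lattice: intersections of subsets of the arrangement (empty one = V).\<close>
definition intersection_lattice :: "(rat^'n::finite) set set \<Rightarrow> (rat^'n) set set" where
  "intersection_lattice \<A> = {\<Inter>S | S. S \<subseteq> \<A>}"

definition localization :: "(rat^'n::finite) set set \<Rightarrow> (rat^'n) set \<Rightarrow> (rat^'n) set set" where
  "localization \<A> X = {H \<in> \<A>. X \<subseteq> H}"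

definition is_partition :: "'a set set set \<Rightarrow> 'a set set \<Rightarrow> bool" where
  "is_partition P \<A> \<longleftrightarrow> finite P \<and> (\<forall>b\<in>P. b \<noteq> {}) \<and> \<Union>P = \<A> \<and>
     (\<forall>b\<in>P. \<forall>c\<in>P. b \<noteq> c \<longrightarrow> b \<inter> c = {})"

text \<open>Independence: for every choice of one hyperplane per block (with a defining form
  lform I), the chosen defining forms are linearly independent (as functionals on V).\<close>
definition independent_partition :: "(rat^'n::finite) set set set \<Rightarrow> bool" where
  "independent_partition P \<longleftrightarrow>
     (\<forall>f :: (rat^'n) set set \<Rightarrow> 'n set.
        (\<forall>b\<in>P. f b \<noteq> {} \<and> hyp (f b) \<in> b) \<longrightarrow>
        (\<forall>c :: (rat^'n) set set \<Rightarrow> rat.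
           (\<forall>x. (\<Sum>b\<in>P. c b * lform (f b) x) = 0) \<longrightarrow> (\<forall>b\<in>P. c b = 0)))"

definition induced_partition ::
  "(rat^'n::finite) set set set \<Rightarrow> (rat^'n) set set \<Rightarrow> (rat^'n) set \<Rightarrow> (rat^'n) set set set" where
  "induced_partition P \<A> X = {b \<inter> localization \<A> X | b. b \<in> P} - {{}}"

definition nice_partition :: "(rat^'n::finite) set set \<Rightarrow> (rat^'n) set set set \<Rightarrow> bool" where
  "nice_partition \<A> P \<longleftrightarrow> is_partition P \<A> \<and> independent_partition P \<and>
     (\<forall>X\<in>intersection_lattice \<A>. X \<noteq> UNIV \<longrightarrow>
        (\<exists>b\<in>induced_partition P \<A> X. \<exists>H. b = {H}))"

end

theory Submission imports Defs begin

text \<open>Put X = H_A \<inter> H_B. Testing the defining form of a hyperplane H_I \<supseteq> X on the vectors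
  e_i - e_j, e_k and e_i + e_j - e_k shows that I is one of A, B, or A \<triangle> B, the last only
  when A and B are disjoint or nested. For conflicting A, B the arrangement therefore has
  exactly the two hyperplanes H_A, H_B above X. A nice partition must have a singleton block
  in the induced partition of {H_A, H_B}, which is impossible if H_A and H_B share a block.\<close>

lemma lform_axis: "lform I (axis i 1) = of_bool (i \<in> I)"
  unfolding lform_def axis_def by (simp add: sum.delta')

lemma lform_add: "lform I (x + y) = lform I x + lform I y"
  unfolding lform_def by (simp add: sum.distrib)

lemma lform_diff: "lform I (x - y) = lform I x - lform I y"
  unfolding lform_def by (simp add: sum_subtractf)

lemma hyp_subset_hypD:
  assumes "hyp A \<subseteq> hyp B"
  shows "B \<subseteq> A"
proof
  fix j assume "j \<in> B"
  then have "axis j 1 \<notin> hyp B" by (simp add: hyp_def lform_axis)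
  with assms have "axis j 1 \<notin> hyp A" by blast
  then show "j \<in> A" by (simp add: hyp_def lform_axis)
qed

lemma hyp_eq_iff: "hyp A = hyp B \<longleftrightarrow> A = B"
  using hyp_subset_hypD by blast

lemma hyp_eq_UNIV_iff: "hyp A = UNIV \<longleftrightarrow> A = {}"
  using hyp_subset_hypD[of "{}" A] by (auto simp: hyp_def lform_def)

lemma zero_one_arrangement_hyp_nonempty:
  assumes "zero_one_arrangement \<A>" and "hyp C \<in> \<A>"
  shows "C \<noteq> {}"
  using assms hyp_eq_iff unfolding zero_one_arrangement_def by metis

context
  fixes A B I :: "'n::finite set"
  assumes hyp_inter_subset: "hyp A \<inter> hyp B \<subseteq> hyp I"
begin

private lemma lform_vanishes:
  "lform A x = 0 \<Longrightarrow> lform B x = 0 \<Longrightarrow> lform I x = 0"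
  using hyp_inter_subset by (auto simp: hyp_def)

lemma index_subset_Un: "I \<subseteq> A \<union> B"
  using lform_vanishes[of "axis _ 1"] by (force simp: lform_axis)

lemma index_mem_cong:
  assumes "i \<in> A \<longleftrightarrow> j \<in> A" and "i \<in> B \<longleftrightarrow> j \<in> B"
  shows "i \<in> I \<longleftrightarrow> j \<in> I"
  using assms lform_vanishes[of "axis i 1 - axis j 1"] by (auto simp: lform_diff lform_axis)

lemma index_crossing:
  assumes "i \<in> A - B" and "j \<in> B - A" and "k \<in> A \<inter> B"
  shows "of_bool (i \<in> I) + of_bool (j \<in> I) = (of_bool (k \<in> I) :: rat)"
  using assms lform_vanishes[of "axis i 1 + axis j 1 - axis k 1"]
  by (auto simp: lform_add lform_diff lform_axis)

end

lemma hyp_inter_subset_hyp_cases: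
  assumes sub: "hyp A \<inter> hyp B \<subseteq> hyp I"
    and "I \<noteq> {}" and "A \<noteq> B"
  shows "I = A \<or> I = B \<or> (I = sym_diff A B \<and> (A \<inter> B = {} \<or> A \<subset> B \<or> B \<subset> A))"
proof -
  have I_Un: "I \<subseteq> A \<union> B" using index_subset_Un[OF sub] .
  note cong = index_mem_cong[OF sub]
  show ?thesis
  proof (cases "A \<inter> B \<noteq> {} \<and> \<not> A \<subseteq> B \<and> \<not> B \<subseteq> A")
    case True
    then obtain i j k where ijk: "i \<in> A - B" "j \<in> B - A" "k \<in> A \<inter> B" by blast
    have atoms: "x \<in> I \<longleftrightarrow> (x \<in> A - B \<and> i \<in> I) \<or> (x \<in> B - A \<and> j \<in> I) \<or> (x \<in> A \<inter> B \<and> k \<in> I)"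
      for x using I_Un cong[of x i] cong[of x j] cong[of x k] ijk by blast
    have "i \<in> I \<or> j \<in> I \<or> k \<in> I" using \<open>I \<noteq> {}\<close> atoms by blast
    with index_crossing[OF sub ijk] have "k \<in> I \<and> (i \<in> I \<longleftrightarrow> j \<notin> I)"
      by (auto simp: of_bool_def split: if_splits)
    then have "I = A \<or> I = B" using atoms by blast
    then show ?thesis by blast
  next
    case False
    with \<open>A \<noteq> B\<close> have nested: "A \<inter> B = {} \<or> A \<subset> B \<or> B \<subset> A" by blast
    have inter: "A \<inter> B \<inter> I \<noteq> {} \<Longrightarrow> A \<inter> B \<subseteq> I"
      and A_diff: "(A - B) \<inter> I \<noteq> {} \<Longrightarrow> A - B \<subseteq> I"
      and B_diff: "(B - A) \<inter> I \<noteq> {} \<Longrightarrow> B - A \<subseteq> I"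
      using cong by blast+
    from nested have "I = A \<or> I = B \<or> I = sym_diff A B"
    proof (elim disjE)
      assume "A \<inter> B = {}"
      then show ?thesis using A_diff B_diff I_Un \<open>I \<noteq> {}\<close>
        unfolding sym_diff_def by auto
    next
      assume "A \<subset> B"
      then show ?thesis using inter B_diff I_Un \<open>I \<noteq> {}\<close>
        unfolding sym_diff_def by auto
    next
      assume "B \<subset> A"
      then show ?thesis using inter A_diff I_Un \<open>I \<noteq> {}\<close>
        unfolding sym_diff_def by auto
    qed
    with nested show ?thesis by blast
  qed
qed

lemma Int_in_intersection_lattice:
  "H \<in> \<A> \<Longrightarrow> K \<in> \<A> \<Longrightarrow> H \<inter> K \<in> intersection_lattice \<A>"
  unfolding intersection_lattice_def by (intro CollectI exI[of _ "{H, K}"]) auto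

lemma localization_conflicting:
  assumes "zero_one_arrangement \<A>" and "hyp A \<in> \<A>" and "hyp B \<in> \<A>" and "A \<noteq> B"
    and "conflicting \<A> A B"
  shows "localization \<A> (hyp A \<inter> hyp B) = {hyp A, hyp B}"
proof (intro equalityI subsetI)
  fix H assume "H \<in> localization \<A> (hyp A \<inter> hyp B)"
  then have H: "H \<in> \<A>" "hyp A \<inter> hyp B \<subseteq> H" unfolding localization_def by auto
  then obtain I where I: "I \<noteq> {}" "H = hyp I"
    using assms(1) unfolding zero_one_arrangement_def by blast
  have "I = A \<or> I = B \<or> (I = sym_diff A B \<and> (A \<inter> B = {} \<or> A \<subset> B \<or> B \<subset> A))"
    using hyp_inter_subset_hyp_cases[of A B I] H(2) I assms(4) by simp
  moreover have "hyp (sym_diff A B) \<notin> \<A>" if "A \<inter> B = {} \<or> A \<subset> B \<or> B \<subset> A"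
    using assms(5) that unfolding conflicting_def by auto
  ultimately show "H \<in> {hyp A, hyp B}"
    using H(1) I(2) by auto
qed (use assms(2,3) in \<open>auto simp: localization_def\<close>)

lemma nice_partition_separates_pair:
  assumes nice: "nice_partition \<A> P" and X: "X \<in> intersection_lattice \<A>" "X \<noteq> UNIV"
    and loc: "localization \<A> X = {H, K}" and "H \<noteq> K" and "b \<in> P"
  shows "\<not> (H \<in> b \<and> K \<in> b)"
proof
  assume HK: "H \<in> b \<and> K \<in> b"
  obtain c G where "c \<in> induced_partition P \<A> X" "c = {G}"
    using nice X unfolding nice_partition_def by blast
  then obtain b' where b': "b' \<in> P" "b' \<inter> {H, K} = {G}"
    using loc unfolding induced_partition_def by auto
  show False
  proof (cases "b' = b")
    case True
    with HK b' \<open>H \<noteq> K\<close> show False by auto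
  next
    case False
    with nice \<open>b \<in> P\<close> b'(1) have "b' \<inter> b = {}"
      unfolding nice_partition_def is_partition_def by blast
    with HK b'(2) show False by auto
  qed
qed

theorem lemma8p7:
  fixes \<A> :: "(rat^'n::finite) set set" and P :: "(rat^'n) set set set" and A B :: "'n set"
  assumes "zero_one_arrangement \<A>"
    and "nice_partition \<A> P"
    and "hyp A \<in> \<A>" and "hyp B \<in> \<A>" and "A \<noteq> B"
    and "conflicting \<A> A B"
  shows "\<not> (\<exists>b\<in>P. hyp A \<in> b \<and> hyp B \<in> b)"
proof -
  have "A \<noteq> {}" using zero_one_arrangement_hyp_nonempty assms(1,3) .
  then have "hyp A \<inter> hyp B \<noteq> UNIV" using hyp_eq_UNIV_iff by blast
  moreover have "hyp A \<noteq> hyp B" using assms(5) hyp_eq_iff by blast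
  ultimately show ?thesis
    using nice_partition_separates_pair[OF assms(2) Int_in_intersection_lattice[OF assms(3,4)]
        _ localization_conflicting[OF assms(1,3-6)]]
    by blast
qed

end
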